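(* Let $\mathfrak{C}$ be a verification condition provider and $\mathcal{T}\in\{\mathrm{dwp},\mathrm{awp}\}$. If for every annotated loop $C=\mathtt{while}(\varphi)\{C'\}[I]$ and every $f\in\mathbb{E}$, $\mathrm{vc}^{\mathfrak{C},\mathcal{T}}[\![C]\!](f)$ implies $\mathcal{T}[\![C]\!](f)\le I$, then $\mathfrak{C}$ yields upper bounds for $\mathcal{T}$. Analogously, if for every annotated loop $C=\mathtt{while}(\varphi)\{C'\}[I]$ and every $f\in\mathbb{E}$, $\mathrm{vc}^{\mathfrak{C},\mathcal{T}}[\![C]\!](f)$ implies $\mathcal{T}[\![C]\!](f)\ge I$, then $\mathfrak{C}$ yields lower bounds for $\mathcal{T}$.
   Context: States: fix a countably infinite set of program variables with values in $\mathbb{Q}_{\ge 0}$; a state is a map $\sigma$ from variables to $\mathbb{Q}_{\ge0}$ which is $0$ for all but finitely many variables; $\mathsf{States}$ is the set of states. A predicate is a map $\varphi:\mathsf{States}\to\{\mathsf{true},\mathsf{false}\}$. Expectations: $\mathbb{E}$ is the set of maps $\mathsf{States}\to[0,\infty]$, ordered pointwise ($\le,\ge$); $+,\cdot$ pointwise with $0\cdot\infty=0$; $\sqcap,\sqcup$ pointwise min/max; $[\varphi]$ Iverson bracket; $(\varphi\to g)(\sigma)=g(\sigma)$ if $\sigma\models\varphi$, else $\infty$; $f[x/E](\sigma)=f(\sigma[x\mapsto E(\sigma)])$. Programs of $\mathsf{pGCL}$: $C ::= \mathtt{skip} \mid x:=E \mid C;C \mid \mathtt{if}\ \varphi_1\to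 C\ \square\ \varphi_2\to C \mid \{C\}[p]\{C\} \mid \mathtt{while}(\varphi)\{C\}[I]$, where $E:\mathsf{States}\to\mathbb{Q}_{\ge0}$, $p:\mathsf{States}\to[0,1]$, in every guarded choice $\varphi_1\vee\varphi_2$ is valid, and every loop carries an invariant annotation $I\in\mathbb{E}$. Weakest preexpectations for $\mathcal{T}\in\{\mathrm{dwp},\mathrm{awp}\}$: $\mathcal{T}[\![\mathtt{skip}]\!](f)=f$; $\mathcal{T}[\![x:=E]\!](f)=f[x/E]$; $\mathcal{T}[\![C_1;C_2]\!](f)=\mathcal{T}[\![C_1]\!](\mathcal{T}[\![C_2]\!](f))$; $\mathrm{dwp}$ of a guarded choice: $(\varphi_1\to\mathrm{dwp}[\![C_1]\!](f))\sqcap(\varphi_2\to\mathrm{dwp}[\![C_2]\!](f))$; $\mathrm{awp}$ of a guarded choice: $[\varphi_1]\cdot\mathrm{awp}[\![C_1]\!](f)\sqcup[\varphi_2]\cdot\mathrm{awp}[\![C_2]\!](f)$; $\mathcal{T}[\![\{C_1\}[p]\{C_2\}]\!](f)=p\cdot\mathcal{T}[\![C_1]\!](f)+(1-p)\cdot\mathcal{T}[\![C_2]\!](f)$; loops: least fixpoint of $g\mapsto[\neg\varphi]\cdot f+[\varphi]\cdot\mathcal{T}[\![C']\!](g)$. The auxiliary transformer $\mathcal{T}^*$ follows the same rules except $\mathcal{T}^*[\![\mathtt{while}(\varphi)\{C'\}[I]]\!](f)=I$. Verification conditions: a verification condition provider is a map $\mathfrak{C}$ assigning to each annotated loop and each $f\in\mathbb{E}$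 a truth value. $\mathrm{vc}^{\mathfrak{C},\mathcal{T}}[\![C]\!](f)$ is defined inductively: $\mathsf{true}$ for $\mathtt{skip}$ and assignments; $\mathrm{vc}[\![C_1]\!](\mathcal{T}^*[\![C_2]\!](f))\wedge\mathrm{vc}[\![C_2]\!](f)$ for $C_1;C_2$; $\mathrm{vc}[\![C_1]\!](f)\wedge\mathrm{vc}[\![C_2]\!](f)$ for guarded and probabilistic choices; $\mathfrak{C}(\mathtt{while}(\varphi)\{C'\}[I],f)\wedge\mathrm{vc}[\![C']\!](I)$ for loops. $\mathfrak{C}$ yields upper (resp. lower) bounds for $\mathcal{T}$ if for all $C\in\mathsf{pGCL}$ and all $f\in\mathbb{E}$, $\mathrm{vc}^{\mathfrak{C},\mathcal{T}}[\![C]\!](f)$ implies $\mathcal{T}[\![C]\!](f)\le\mathcal{T}^*[\![C]\!](f)$ (resp. $\mathcal{T}[\![C]\!](f)\ge\mathcal{T}^*[\![C]\!](f)$). *)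

theory Defs
  imports "HOL-Library.Extended_Nonnegative_Real"
begin

typedef state = "{\<sigma> :: nat \<Rightarrow> rat. (\<forall>x. 0 \<le> \<sigma> x) \<and> finite {x. \<sigma> x \<noteq> 0}}"
  by (rule exI[of _ "\<lambda>_. 0"]) simp

type_synonym pred = "state \<Rightarrow> bool"
type_synonym expect = "state \<Rightarrow> ennreal"

definition upd :: "state \<Rightarrow> nat \<Rightarrow> rat \<Rightarrow> state" where
  "upd \<sigma> x v = Abs_state ((Rep_state \<sigma>)(x := v))"

definition iverson :: "pred \<Rightarrow> expect" where
  "iverson \<phi> = (\<lambda>\<sigma>. if \<phi> \<sigma> then 1 else 0)"

definition guard_to :: "pred \<Rightarrow> expect \<Rightarrow> expect" where
  "guard_to \<phi> g = (\<lambda>\<sigma>. if \<phi> \<sigma> then g \<sigma> else \<infinity>)"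

definition subst :: "expect \<Rightarrow> nat \<Rightarrow> (state \<Rightarrow> rat) \<Rightarrow> expect" where
  "subst f x E = (\<lambda>\<sigma>. f (upd \<sigma> x (E \<sigma>)))"

datatype prog =
    Skip
  | Assign nat "state \<Rightarrow> rat"
  | Seq prog prog
  | GChoice pred prog pred prog
  | PChoice "state \<Rightarrow> real" prog prog
  | While pred prog expect

fun wf :: "prog \<Rightarrow> bool" where
  "wf Skip = True"
| "wf (Assign x E) = (\<forall>\<sigma>. 0 \<le> E \<sigma>)"
| "wf (Seq C1 C2) = (wf C1 \<and> wf C2)"
| "wf (GChoice \<phi>1 C1 \<phi>2 C2) = ((\<forall>\<sigma>. \<phi>1 \<sigma> \<or> \<phi>2 \<sigma>) \<and> wf C1 \<and> wf C2)"
| "wf (PChoice p C1 C2) = ((\<forall>\<sigma>. 0 \<le> p \<sigma> \<and> p \<sigma> \<le> 1) \<and> wf C1 \<and> wf C2)"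
| "wf (While \<phi> C I) = wf C"

datatype tk = Dwp | Awp

primrec wp :: "tk \<Rightarrow> prog \<Rightarrow> expect \<Rightarrow> expect" where
  "wp T Skip f = f"
| "wp T (Assign x E) f = subst f x E"
| "wp T (Seq C1 C2) f = wp T C1 (wp T C2 f)"
| "wp T (GChoice \<phi>1 C1 \<phi>2 C2) f =
     (case T of
        Dwp \<Rightarrow> inf (guard_to \<phi>1 (wp T C1 f)) (guard_to \<phi>2 (wp T C2 f))
      | Awp \<Rightarrow> sup (\<lambda>\<sigma>. iverson \<phi>1 \<sigma> * wp T C1 f \<sigma>) (\<lambda>\<sigma>. iverson \<phi>2 \<sigma> * wp T C2 f \<sigma>))"
| "wp T (PChoice p C1 C2) f =
     (\<lambda>\<sigma>. ennreal (p \<sigma>) * wp T C1 f \<sigma> + ennreal (1 - p \<sigma>) * wp T C2 f \<sigma>)"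
| "wp T (While \<phi> C I) f =
     lfp (\<lambda>g \<sigma>. iverson (\<lambda>s. \<not> \<phi> s) \<sigma> * f \<sigma> + iverson \<phi> \<sigma> * wp T C g \<sigma>)"

primrec wp_star :: "tk \<Rightarrow> prog \<Rightarrow> expect \<Rightarrow> expect" where
  "wp_star T Skip f = f"
| "wp_star T (Assign x E) f = subst f x E"
| "wp_star T (Seq C1 C2) f = wp_star T C1 (wp_star T C2 f)"
| "wp_star T (GChoice \<phi>1 C1 \<phi>2 C2) f =
     (case T of
        Dwp \<Rightarrow> inf (guard_to \<phi>1 (wp_star T C1 f)) (guard_to \<phi>2 (wp_star T C2 f))
      | Awp \<Rightarrow> sup (\<lambda>\<sigma>. iverson \<phi>1 \<sigma> * wp_star T C1 f \<sigma>) (\<lambda>\<sigma>. iverson \<phi>2 \<sigma> * wp_star T C2 f \<sigma>))"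
| "wp_star T (PChoice p C1 C2) f =
     (\<lambda>\<sigma>. ennreal (p \<sigma>) * wp_star T C1 f \<sigma> + ennreal (1 - p \<sigma>) * wp_star T C2 f \<sigma>)"
| "wp_star T (While \<phi> C I) f = I"

text \<open>A verification condition provider assigns to each annotated loop
(given by guard, body, invariant) and each expectation a truth value.\<close>

type_synonym vcp = "pred \<Rightarrow> prog \<Rightarrow> expect \<Rightarrow> expect \<Rightarrow> bool"

primrec vc :: "vcp \<Rightarrow> tk \<Rightarrow> prog \<Rightarrow> expect \<Rightarrow> bool" where
  "vc \<CC> T Skip f = True"
| "vc \<CC> T (Assign x E) f = True"
| "vc \<CC> T (Seq C1 C2) f = (vc \<CC> T C1 (wp_star T C2 f) \<and> vc \<CC> T C2 f)"
| "vc \<CC> T (GChoice \<phi>1 C1 \<phi>2 C2) f = (vc \<CC> T C1 f \<and> vc \<CC> T C2 f)"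
| "vc \<CC> T (PChoice p C1 C2) f = (vc \<CC> T C1 f \<and> vc \<CC> T C2 f)"
| "vc \<CC> T (While \<phi> C I) f = (\<CC> \<phi> C I f \<and> vc \<CC> T C I)"

definition yields_upper :: "vcp \<Rightarrow> tk \<Rightarrow> bool" where
  "yields_upper \<CC> T \<longleftrightarrow> (\<forall>C f. wf C \<longrightarrow> vc \<CC> T C f \<longrightarrow> wp T C f \<le> wp_star T C f)"

definition yields_lower :: "vcp \<Rightarrow> tk \<Rightarrow> bool" where
  "yields_lower \<CC> T \<longleftrightarrow> (\<forall>C f. wf C \<longrightarrow> vc \<CC> T C f \<longrightarrow> wp T C f \<ge> wp_star T C f)"

end

theory Submission
  imports Defs
begin

text \<open>The transformers wp and wp_star obey the same rules except at loops, and every rule is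
monotone in the results for the subprograms. Hence a comparison between wp and wp_star at
loops, which is exactly what the hypotheses grant, propagates by structural induction to
all programs; monotonicity of wp is what carries it through sequential composition.\<close>

definition gchoice :: "tk \<Rightarrow> pred \<Rightarrow> expect \<Rightarrow> pred \<Rightarrow> expect \<Rightarrow> expect" where
  "gchoice T \<phi>1 g1 \<phi>2 g2 =
     (case T of
        Dwp \<Rightarrow> inf (guard_to \<phi>1 g1) (guard_to \<phi>2 g2)
      | Awp \<Rightarrow> sup (\<lambda>\<sigma>. iverson \<phi>1 \<sigma> * g1 \<sigma>) (\<lambda>\<sigma>. iverson \<phi>2 \<sigma> * g2 \<sigma>))"

definition pchoice :: "(state \<Rightarrow> real) \<Rightarrow> expect \<Rightarrow> expect \<Rightarrow> expect" where
  "pchoice p g1 g2 = (\<lambda>\<sigma>. ennreal (p \<sigma>) * g1 \<sigma> + ennreal (1 - p \<sigma>) * g2 \<sigma>)"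

lemma wp_GChoice: "wp T (GChoice \<phi>1 C1 \<phi>2 C2) f = gchoice T \<phi>1 (wp T C1 f) \<phi>2 (wp T C2 f)"
  by (simp add: gchoice_def)

lemma wp_star_GChoice:
  "wp_star T (GChoice \<phi>1 C1 \<phi>2 C2) f = gchoice T \<phi>1 (wp_star T C1 f) \<phi>2 (wp_star T C2 f)"
  by (simp add: gchoice_def)

lemma wp_PChoice: "wp T (PChoice p C1 C2) f = pchoice p (wp T C1 f) (wp T C2 f)"
  by (simp add: pchoice_def)

lemma wp_star_PChoice: "wp_star T (PChoice p C1 C2) f = pchoice p (wp_star T C1 f) (wp_star T C2 f)"
  by (simp add: pchoice_def)

lemma gchoice_mono:
  assumes "g1 \<le> h1" and "g2 \<le> h2"
  shows "gchoice T \<phi>1 g1 \<phi>2 g2 \<le> gchoice T \<phi>1 h1 \<phi>2 h2"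
  using assms
  by (cases T) (auto simp: gchoice_def le_fun_def guard_to_def iverson_def
                     intro: le_infI1 le_infI2 le_supI1 le_supI2)

lemma pchoice_mono:
  assumes "g1 \<le> h1" and "g2 \<le> h2"
  shows "pchoice p g1 g2 \<le> pchoice p h1 h2"
  using assms by (auto simp: pchoice_def le_fun_def intro!: add_mono mult_left_mono)

lemma wp_mono: "f \<le> g \<Longrightarrow> wp T C f \<le> wp T C g"
proof (induction C arbitrary: f g)
  case (Assign x E)
  then show ?case by (auto simp: subst_def le_fun_def)
next
  case (GChoice \<phi>1 C1 \<phi>2 C2)
  then show ?case unfolding wp_GChoice by (intro gchoice_mono) simp_all
next
  case (PChoice p C1 C2)
  then show ?case unfolding wp_PChoice by (intro pchoice_mono) simp_all
next
  case (While \<phi> C I)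
  show ?case
    unfolding wp.simps
    by (rule lfp_mono) (use While in \<open>auto simp: le_fun_def intro!: add_mono mult_left_mono\<close>)
qed simp_all

lemma wp_le_wp_star:
  assumes loop: "\<forall>\<phi> C' I f. wf (While \<phi> C' I) \<longrightarrow> vc \<CC> T (While \<phi> C' I) f
                   \<longrightarrow> wp T (While \<phi> C' I) f \<le> I"
  shows "wf C \<Longrightarrow> vc \<CC> T C f \<Longrightarrow> wp T C f \<le> wp_star T C f"
proof (induction C arbitrary: f)
  case (Seq C1 C2)
  have "wp T C1 (wp T C2 f) \<le> wp T C1 (wp_star T C2 f)"
    using Seq by (simp add: wp_mono)
  also have "\<dots> \<le> wp_star T C1 (wp_star T C2 f)"
    using Seq by simp
  finally show ?case by simp
next
  case (GChoice \<phi>1 C1 \<phi>2 C2)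
  then show ?case unfolding wp_GChoice wp_star_GChoice by (intro gchoice_mono) simp_all
next
  case (PChoice p C1 C2)
  then show ?case unfolding wp_PChoice wp_star_PChoice by (intro pchoice_mono) simp_all
next
  case (While \<phi> C I)
  then show ?case using loop by simp
qed simp_all

lemma wp_star_le_wp:
  assumes loop: "\<forall>\<phi> C' I f. wf (While \<phi> C' I) \<longrightarrow> vc \<CC> T (While \<phi> C' I) f
                   \<longrightarrow> wp T (While \<phi> C' I) f \<ge> I"
  shows "wf C \<Longrightarrow> vc \<CC> T C f \<Longrightarrow> wp_star T C f \<le> wp T C f"
proof (induction C arbitrary: f)
  case (Seq C1 C2)
  have "wp_star T C1 (wp_star T C2 f) \<le> wp T C1 (wp_star T C2 f)"
    using Seq by simp
  also have "\<dots> \<le> wp T C1 (wp T C2 f)"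
    using Seq by (simp add: wp_mono)
  finally show ?case by simp
next
  case (GChoice \<phi>1 C1 \<phi>2 C2)
  then show ?case unfolding wp_GChoice wp_star_GChoice by (intro gchoice_mono) simp_all
next
  case (PChoice p C1 C2)
  then show ?case unfolding wp_PChoice wp_star_PChoice by (intro pchoice_mono) simp_all
next
  case (While \<phi> C I)
  then show ?case using loop by simp
qed simp_all

theorem lemmaB2:
  fixes \<CC> :: vcp and T :: tk
  shows "((\<forall>\<phi> C' I f. wf (While \<phi> C' I) \<longrightarrow> vc \<CC> T (While \<phi> C' I) f
            \<longrightarrow> wp T (While \<phi> C' I) f \<le> I) \<longrightarrow> yields_upper \<CC> T)
       \<and> ((\<forall>\<phi> C' I f. wf (While \<phi> C' I) \<longrightarrow> vc \<CC> T (While \<phi> C' I) f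
            \<longrightarrow> wp T (While \<phi> C' I) f \<ge> I) \<longrightarrow> yields_lower \<CC> T)"
  unfolding yields_upper_def yields_lower_def
  using wp_le_wp_star wp_star_le_wp by blast

end
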